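(* The reflection map $r:(\mathcal G^n)^{\circ}\to\mathcal G^n$ on the $B_n$-groupoid $\mathcal G^n$ is a fully faithful functor.
   Context: $G$ is a finite group with identity $e$. $B_n$ (generators $b_1,\dots,b_{n-1}$) acts on $G^n$ by $b_i(\boldsymbol\gamma)=(\gamma_1,\dots,\gamma_{i-1},\gamma_i\gamma_{i+1}\gamma_i^{-1},\gamma_i,\gamma_{i+2},\dots,\gamma_n)$. For $b\in B_n$ and $\boldsymbol\gamma\in G^n$ there is an associated element $b_{\boldsymbol\gamma}\in G^n\rtimes S_n$ ($G^n\rtimes S_n$ acting on $G^n$ by componentwise conjugation and permutation of positions), determined by $b_{i,\boldsymbol\gamma}=((e,\dots,e,\gamma_i,e,\dots,e),(i,i+1))$ ($\gamma_i$ in slot $i$) and $(bb')_{\boldsymbol\gamma}=b_{b'\boldsymbol\gamma}b'_{\boldsymbol\gamma}$; it acts on $\boldsymbol\gamma$ as $b$ does. The $B_n$-groupoid $\mathcal G^n$ has objects $G^n$ and morphisms $\mathrm{hom}(\boldsymbol\gamma_1,\boldsymbol\gamma_2)=\{b_{\boldsymbol\gamma_1}:b\in B_n,\ b\boldsymbol\gamma_1=\boldsymbol\gamma_2\}$, composed by multiplication in $G^n\rtimes S_n$. The reflection map is the functor $r:(\mathcal G^n)^\circ\to\mathcal G^n$ (from the opposite groupoid) given on objects by $r(\gamma_1,\dots,\gamma_n)=(\gamma_n^{-1},\dots,\gamma_1^{-1})$ and on morphisms by sending $b_{i,\boldsymbol\gamma}$ (viewed as an arrow $b_i\boldsymbol\gamma\to\boldsymbol\gamma$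 of the opposite groupoid) to $b_{n-i,r(b_i\boldsymbol\gamma)}:r(b_i\boldsymbol\gamma)\to r(\boldsymbol\gamma)$, extended to composites (this is well defined). *)

theory Defs
  imports "HOL-Algebra.Group"
begin

text \<open>Positions are 1..n. A tuple in G^n is a function nat => 'a with values
in carrier G on 1..n and the unit elsewhere. An element of G^n x| S_n is a pair (g, sigma)
with g such a tuple and sigma a permutation of nat fixing everything outside 1..n.
A braid is represented by a word in the generators b_i and their inverses:
(i, True) is b_i, (i, False) is b_i^-1; the list [x1,...,xk] stands for x1 x2 ... xk
(so xk acts first).\<close>

definition objs :: "('a, 'b) monoid_scheme \<Rightarrow> nat \<Rightarrow> (nat \<Rightarrow> 'a) set" where
  "objs G n = {\<gamma>. (\<forall>k\<in>{1..n}. \<gamma> k \<in> carrier G) \<and> (\<forall>k. k \<notin> {1..n} \<longrightarrow> \<gamma> k = \<one>\<^bsub>G\<^esub>)}"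

definition gens :: "nat \<Rightarrow> (nat \<times> bool) set" where
  "gens n = {(i, s). i \<in> {1..n - 1}}"

definition gen_act :: "('a, 'b) monoid_scheme \<Rightarrow> nat \<times> bool \<Rightarrow> (nat \<Rightarrow> 'a) \<Rightarrow> (nat \<Rightarrow> 'a)" where
  "gen_act G x \<gamma> = (case x of (i, s) \<Rightarrow>
     if s then \<gamma>(i := \<gamma> i \<otimes>\<^bsub>G\<^esub> \<gamma> (i+1) \<otimes>\<^bsub>G\<^esub> inv\<^bsub>G\<^esub> (\<gamma> i), i+1 := \<gamma> i)
     else \<gamma>(i := \<gamma> (i+1), i+1 := inv\<^bsub>G\<^esub> (\<gamma> (i+1)) \<otimes>\<^bsub>G\<^esub> \<gamma> i \<otimes>\<^bsub>G\<^esub> \<gamma> (i+1)))"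

fun braid_act :: "('a, 'b) monoid_scheme \<Rightarrow> (nat \<times> bool) list \<Rightarrow> (nat \<Rightarrow> 'a) \<Rightarrow> (nat \<Rightarrow> 'a)" where
  "braid_act G [] \<gamma> = \<gamma>"
| "braid_act G (x # w) \<gamma> = gen_act G x (braid_act G w \<gamma>)"

text \<open>The semidirect product G^n x| S_n, acting on G^n by
(g, sigma) . delta = (k |-> g_k delta_(sigma^-1 k) g_k^-1).\<close>
definition sd_mult :: "('a, 'b) monoid_scheme \<Rightarrow> (nat \<Rightarrow> 'a) \<times> (nat \<Rightarrow> nat)
    \<Rightarrow> (nat \<Rightarrow> 'a) \<times> (nat \<Rightarrow> nat) \<Rightarrow> (nat \<Rightarrow> 'a) \<times> (nat \<Rightarrow> nat)" where
  "sd_mult G x y = (case x of (g, \<sigma>) \<Rightarrow> case y of (h, \<tau>) \<Rightarrow>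
     (\<lambda>k. g k \<otimes>\<^bsub>G\<^esub> h (inv_into UNIV \<sigma> k), \<sigma> \<circ> \<tau>))"

definition sd_inv :: "('a, 'b) monoid_scheme \<Rightarrow> (nat \<Rightarrow> 'a) \<times> (nat \<Rightarrow> nat) \<Rightarrow> (nat \<Rightarrow> 'a) \<times> (nat \<Rightarrow> nat)" where
  "sd_inv G x = (case x of (g, \<sigma>) \<Rightarrow> (\<lambda>j. inv\<^bsub>G\<^esub> (g (\<sigma> j)), inv_into UNIV \<sigma>))"

text \<open>b_(i,gamma) = ((e,..,gamma_i,..,e), (i,i+1)); (b_i^-1)_gamma is the inverse of
b_(i, b_i^-1 gamma), as forced by (b b')_gamma = b_(b' gamma) b'_gamma.\<close>
definition gen_pos_elt :: "('a, 'b) monoid_scheme \<Rightarrow> nat \<Rightarrow> (nat \<Rightarrow> 'a) \<Rightarrow> (nat \<Rightarrow> 'a) \<times> (nat \<Rightarrow> nat)" where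
  "gen_pos_elt G i \<gamma> = ((\<lambda>k. \<one>\<^bsub>G\<^esub>)(i := \<gamma> i), id(i := i + 1, i + 1 := i))"

definition gen_elt :: "('a, 'b) monoid_scheme \<Rightarrow> nat \<times> bool \<Rightarrow> (nat \<Rightarrow> 'a) \<Rightarrow> (nat \<Rightarrow> 'a) \<times> (nat \<Rightarrow> nat)" where
  "gen_elt G x \<gamma> = (case x of (i, s) \<Rightarrow>
     if s then gen_pos_elt G i \<gamma> else sd_inv G (gen_pos_elt G i (gen_act G (i, False) \<gamma>)))"

fun braid_elt :: "('a, 'b) monoid_scheme \<Rightarrow> (nat \<times> bool) list \<Rightarrow> (nat \<Rightarrow> 'a) \<Rightarrow> (nat \<Rightarrow> 'a) \<times> (nat \<Rightarrow> nat)" where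
  "braid_elt G [] \<gamma> = ((\<lambda>k. \<one>\<^bsub>G\<^esub>), id)"
| "braid_elt G (x # w) \<gamma> = sd_mult G (gen_elt G x (braid_act G w \<gamma>)) (braid_elt G w \<gamma>)"

definition hom :: "('a, 'b) monoid_scheme \<Rightarrow> nat \<Rightarrow> (nat \<Rightarrow> 'a) \<Rightarrow> (nat \<Rightarrow> 'a)
    \<Rightarrow> ((nat \<Rightarrow> 'a) \<times> (nat \<Rightarrow> nat)) set" where
  "hom G n \<gamma>1 \<gamma>2 = {braid_elt G w \<gamma>1 | w. set w \<subseteq> gens n \<and> braid_act G w \<gamma>1 = \<gamma>2}"

definition refl_obj :: "('a, 'b) monoid_scheme \<Rightarrow> nat \<Rightarrow> (nat \<Rightarrow> 'a) \<Rightarrow> (nat \<Rightarrow> 'a)" where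
  "refl_obj G n \<gamma> = (\<lambda>k. if k \<in> {1..n} then inv\<^bsub>G\<^esub> (\<gamma> (n + 1 - k)) else \<one>\<^bsub>G\<^esub>)"

text \<open>Reflection on words: b_i^(+-1) |-> b_(n-i)^(+-1), order reversed (contravariance).\<close>
definition refl_word :: "nat \<Rightarrow> (nat \<times> bool) list \<Rightarrow> (nat \<times> bool) list" where
  "refl_word n w = rev (map (\<lambda>(i, s). (n - i, s)) w)"

text \<open>Reflection on morphisms: a morphism f = w_gamma1 : gamma1 -> w gamma1 of the groupoid,
viewed as an arrow w gamma1 -> gamma1 of the opposite groupoid, is sent to
(refl_word w)_(r(w gamma1)) : r(w gamma1) -> r(gamma1). This extends the assignment
b_(i,gamma) |-> b_(n-i, r(b_i gamma)) to composites.\<close>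
definition refl_mor :: "('a, 'b) monoid_scheme \<Rightarrow> nat \<Rightarrow> (nat \<Rightarrow> 'a)
    \<Rightarrow> (nat \<Rightarrow> 'a) \<times> (nat \<Rightarrow> nat) \<Rightarrow> (nat \<Rightarrow> 'a) \<times> (nat \<Rightarrow> nat)" where
  "refl_mor G n \<gamma>1 f = (let w = (SOME w. set w \<subseteq> gens n \<and> braid_elt G w \<gamma>1 = f)
     in braid_elt G (refl_word n w) (refl_obj G n (braid_act G w \<gamma>1)))"

end

theory Submission
  imports Defs
begin

(* Let rho be the reversal k |-> n + 1 - k of the positions and let Phi on G^n x| S_n send
   (g, sigma) to rho (g, sigma)^-1 rho: an involutive anti-automorphism. For a generator one
   checks directly that b_(n-i)^(+-1) moves r(b_i^(+-1) gamma) back to r(gamma) with element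
   Phi((b_i^(+-1))_gamma). By induction over words, the reflected word w' of w therefore
   satisfies w'(r(w gamma)) = r(gamma) and w'_(r(w gamma)) = Phi(w_gamma). So r acts as Phi on
   morphisms, which makes it well defined, and Phi maps hom(gamma1, gamma2) into
   hom(r gamma2, r gamma1) and back, being an involution. *)

definition rev_pos :: "nat \<Rightarrow> nat \<Rightarrow> nat" where
  "rev_pos n k = (if k \<in> {1..n} then n + 1 - k else k)"

lemma rev_pos_rev_pos [simp]: "rev_pos n (rev_pos n k) = k"
  unfolding rev_pos_def by auto

definition transp_adj :: "nat \<Rightarrow> nat \<Rightarrow> nat" where
  "transp_adj i = id(i := i + 1, i + 1 := i)"

lemma transp_adj_transp_adj [simp]: "transp_adj i (transp_adj i k) = k"
  unfolding transp_adj_def by auto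

lemma bij_transp_adj [simp]: "bij (transp_adj i)"
  by (rule o_bij[where g = "transp_adj i"]) auto

lemma inv_transp_adj [simp]: "inv_into UNIV (transp_adj i) = transp_adj i"
  by (rule inv_unique_comp) auto

lemma rev_pos_conj_transp_adj:
  assumes "1 \<le> i" "i < n"
  shows "rev_pos n \<circ> transp_adj i \<circ> rev_pos n = transp_adj (n - i)"
proof
  fix k
  consider "k = n - i" | "k = n - i + 1" | "k \<noteq> n - i" "k \<noteq> n - i + 1"
    by blast
  then show "(rev_pos n \<circ> transp_adj i \<circ> rev_pos n) k = transp_adj (n - i) k"
  proof cases
    case 3
    then have "rev_pos n k \<noteq> i" "rev_pos n k \<noteq> i + 1"
      using assms by (auto simp: rev_pos_def)
    with 3 show ?thesis
      by (simp add: transp_adj_def)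
  qed (use assms in \<open>auto simp: rev_pos_def transp_adj_def\<close>)
qed

lemma inv_into_conj_rev_pos:
  "bij \<sigma> \<Longrightarrow> inv_into UNIV (rev_pos n \<circ> inv_into UNIV \<sigma> \<circ> rev_pos n) = rev_pos n \<circ> \<sigma> \<circ> rev_pos n"
  by (rule inv_unique_comp) (auto simp: fun_eq_iff bij_is_inj bij_is_surj surj_f_inv_f)

definition sd_elt :: "('a, 'b) monoid_scheme \<Rightarrow> (nat \<Rightarrow> 'a) \<times> (nat \<Rightarrow> nat) \<Rightarrow> bool" where
  "sd_elt G x \<longleftrightarrow> (\<forall>k. fst x k \<in> carrier G) \<and> bij (snd x)"

definition carrier_valued :: "('a, 'b) monoid_scheme \<Rightarrow> (nat \<Rightarrow> 'a) \<Rightarrow> bool" where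
  "carrier_valued G \<gamma> \<longleftrightarrow> (\<forall>k. \<gamma> k \<in> carrier G)"

definition sd_refl :: "('a, 'b) monoid_scheme \<Rightarrow> nat
    \<Rightarrow> (nat \<Rightarrow> 'a) \<times> (nat \<Rightarrow> nat) \<Rightarrow> (nat \<Rightarrow> 'a) \<times> (nat \<Rightarrow> nat)" where
  "sd_refl G n x = (case x of (g, \<sigma>) \<Rightarrow>
     (\<lambda>k. inv\<^bsub>G\<^esub> (g (\<sigma> (rev_pos n k))), rev_pos n \<circ> inv_into UNIV \<sigma> \<circ> rev_pos n))"

lemma refl_obj_fun_upd:
  assumes "1 \<le> i" "i < n"
  shows "refl_obj G n (\<beta>(i := a, i + 1 := b)) =
    (refl_obj G n \<beta>)(n - i := inv\<^bsub>G\<^esub> b, n - i + 1 := inv\<^bsub>G\<^esub> a)"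
proof
  fix k
  show "refl_obj G n (\<beta>(i := a, i + 1 := b)) k =
      ((refl_obj G n \<beta>)(n - i := inv\<^bsub>G\<^esub> b, n - i + 1 := inv\<^bsub>G\<^esub> a)) k"
    using assms by (cases "k = n - i \<or> k = n - i + 1") (auto simp: refl_obj_def)
qed

lemma refl_obj_at:
  assumes "1 \<le> i" "i < n"
  shows "refl_obj G n \<beta> (n - i) = inv\<^bsub>G\<^esub> (\<beta> (i + 1))"
    and "refl_obj G n \<beta> (n - i + 1) = inv\<^bsub>G\<^esub> (\<beta> i)"
proof -
  have "n - i \<in> {1..n}" "n + 1 - (n - i) = i + 1" "n - i + 1 \<in> {1..n}" "n + 1 - (n - i + 1) = i"
    using assms by auto
  then show "refl_obj G n \<beta> (n - i) = inv\<^bsub>G\<^esub> (\<beta> (i + 1))"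
    and "refl_obj G n \<beta> (n - i + 1) = inv\<^bsub>G\<^esub> (\<beta> i)"
    unfolding refl_obj_def by simp_all
qed

lemma refl_word_Cons: "refl_word n ((i, s) # w) = refl_word n w @ [(n - i, s)]"
  unfolding refl_word_def by simp

lemma refl_word_gens: "set w \<subseteq> gens n \<Longrightarrow> set (refl_word n w) \<subseteq> gens n"
  unfolding refl_word_def gens_def by auto

lemma braid_act_append: "braid_act G (u @ v) \<gamma> = braid_act G u (braid_act G v \<gamma>)"
  by (induction u) auto

lemma gen_pos_elt_eq: "gen_pos_elt G i \<gamma> = ((\<lambda>k. \<one>\<^bsub>G\<^esub>)(i := \<gamma> i), transp_adj i)"
  unfolding gen_pos_elt_def transp_adj_def by simp

context group
begin

lemma carrier_valued_objs:
  assumes "\<gamma> \<in> objs G n"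
  shows "carrier_valued G \<gamma>"
  unfolding carrier_valued_def
proof
  fix k
  show "\<gamma> k \<in> carrier G"
    using assms unfolding objs_def by (cases "k \<in> {1..n}") auto
qed

lemma carrier_valued_refl_obj: "carrier_valued G \<gamma> \<Longrightarrow> carrier_valued G (refl_obj G n \<gamma>)"
  unfolding carrier_valued_def refl_obj_def by auto

lemma refl_obj_refl_obj:
  assumes "\<gamma> \<in> objs G n"
  shows "refl_obj G n (refl_obj G n \<gamma>) = \<gamma>"
proof
  fix k
  show "refl_obj G n (refl_obj G n \<gamma>) k = \<gamma> k"
  proof (cases "k \<in> {1..n}")
    case True
    then have "n + 1 - k \<in> {1..n}" "n + 1 - (n + 1 - k) = k" "\<gamma> k \<in> carrier G"
      using assms unfolding objs_def by auto
    with True show ?thesis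
      unfolding refl_obj_def by simp
  next
    case False
    then have "\<gamma> k = \<one>"
      using assms unfolding objs_def by blast
    with False show ?thesis
      unfolding refl_obj_def by simp
  qed
qed

lemma carrier_valued_gen_act: "carrier_valued G \<gamma> \<Longrightarrow> carrier_valued G (gen_act G x \<gamma>)"
  unfolding carrier_valued_def gen_act_def by (auto split: prod.splits)

lemma carrier_valued_braid_act: "carrier_valued G \<gamma> \<Longrightarrow> carrier_valued G (braid_act G w \<gamma>)"
  by (induction w) (auto simp: carrier_valued_gen_act)

lemma m_inv_cancel_left: "x \<in> carrier G \<Longrightarrow> y \<in> carrier G \<Longrightarrow> x \<otimes> (inv x \<otimes> y) = y"
  by (simp add: m_assoc[symmetric])

lemma inv_m_cancel_left: "x \<in> carrier G \<Longrightarrow> y \<in> carrier G \<Longrightarrow> inv x \<otimes> (x \<otimes> y) = y"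
  by (simp add: m_assoc[symmetric])

lemma gen_act_pos_neg: "carrier_valued G \<beta> \<Longrightarrow> gen_act G (i, True) (gen_act G (i, False) \<beta>) = \<beta>"
  unfolding carrier_valued_def gen_act_def by (simp add: m_assoc m_inv_cancel_left fun_eq_iff)

lemma gen_act_refl_obj:
  assumes "1 \<le> i" "i < n" "carrier_valued G \<beta>"
  shows "gen_act G (n - i, s) (refl_obj G n (gen_act G (i, s) \<beta>)) = refl_obj G n \<beta>"
proof -
  have c: "\<beta> i \<in> carrier G" "\<beta> (i + 1) \<in> carrier G"
    using assms(3) unfolding carrier_valued_def by auto
  note upd = refl_obj_fun_upd[OF assms(1,2)]
  note group_simps = gen_act_def refl_obj_at[OF assms(1,2), simplified] inv_mult_group m_assoc
    m_inv_cancel_left inv_m_cancel_left fun_eq_iff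
  show ?thesis
  proof (cases s)
    case True
    have "gen_act G (i, s) \<beta> = \<beta>(i := \<beta> i \<otimes> \<beta> (i + 1) \<otimes> inv (\<beta> i), i + 1 := \<beta> i)"
      using True by (simp add: gen_act_def)
    then show ?thesis
      using True c by (simp only: upd) (simp add: group_simps)
  next
    case False
    have "gen_act G (i, s) \<beta> = \<beta>(i := \<beta> (i + 1), i + 1 := inv (\<beta> (i + 1)) \<otimes> \<beta> i \<otimes> \<beta> (i + 1))"
      using False by (simp add: gen_act_def)
    then show ?thesis
      using False c by (simp only: upd) (simp add: group_simps)
  qed
qed

lemma sd_elt_gen_pos_elt: "carrier_valued G \<gamma> \<Longrightarrow> sd_elt G (gen_pos_elt G i \<gamma>)"
  unfolding gen_pos_elt_eq sd_elt_def carrier_valued_def by auto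

lemma sd_elt_sd_mult: "sd_elt G x \<Longrightarrow> sd_elt G y \<Longrightarrow> sd_elt G (sd_mult G x y)"
  unfolding sd_elt_def sd_mult_def by (auto split: prod.splits intro: bij_comp)

lemma sd_elt_sd_inv: "sd_elt G x \<Longrightarrow> sd_elt G (sd_inv G x)"
  unfolding sd_elt_def sd_inv_def by (auto split: prod.splits intro: bij_imp_bij_inv)

lemma sd_elt_gen_elt: "carrier_valued G \<gamma> \<Longrightarrow> sd_elt G (gen_elt G x \<gamma>)"
  unfolding gen_elt_def
  by (auto split: prod.splits intro!: sd_elt_sd_inv sd_elt_gen_pos_elt carrier_valued_gen_act)

lemma sd_elt_one: "sd_elt G ((\<lambda>k. \<one>), id)"
  unfolding sd_elt_def by auto

lemma sd_elt_braid_elt: "carrier_valued G \<gamma> \<Longrightarrow> sd_elt G (braid_elt G w \<gamma>)"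
  by (induction w) (auto intro!: sd_elt_sd_mult sd_elt_gen_elt carrier_valued_braid_act sd_elt_one)

lemma sd_elt_hom: "f \<in> hom G n \<gamma>1 \<gamma>2 \<Longrightarrow> carrier_valued G \<gamma>1 \<Longrightarrow> sd_elt G f"
  unfolding hom_def using sd_elt_braid_elt by auto

lemma sd_mult_one_left: "sd_elt G x \<Longrightarrow> sd_mult G ((\<lambda>k. \<one>), id) x = x"
  unfolding sd_elt_def sd_mult_def by (auto split: prod.splits)

lemma sd_mult_one_right: "sd_elt G x \<Longrightarrow> sd_mult G x ((\<lambda>k. \<one>), id) = x"
  unfolding sd_elt_def sd_mult_def by (auto split: prod.splits)

lemma sd_mult_assoc:
  assumes "sd_elt G x" "sd_elt G y" "sd_elt G z"
  shows "sd_mult G (sd_mult G x y) z = sd_mult G x (sd_mult G y z)"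
proof -
  obtain g \<sigma> h \<tau> k \<upsilon> where xyz: "x = (g, \<sigma>)" "y = (h, \<tau>)" "z = (k, \<upsilon>)"
    by (metis prod.exhaust)
  have "bij \<sigma>" "bij \<tau>" "\<And>j. g j \<in> carrier G" "\<And>j. h j \<in> carrier G" "\<And>j. k j \<in> carrier G"
    using assms unfolding xyz sd_elt_def by auto
  then show ?thesis
    unfolding xyz sd_mult_def by (simp add: o_inv_distrib o_assoc m_assoc)
qed

lemma sd_refl_sd_mult:
  assumes "sd_elt G x" "sd_elt G y"
  shows "sd_refl G n (sd_mult G x y) = sd_mult G (sd_refl G n y) (sd_refl G n x)"
proof -
  obtain g \<sigma> h \<tau> where xy: "x = (g, \<sigma>)" "y = (h, \<tau>)"
    by (metis prod.exhaust)
  have "bij \<sigma>" "bij \<tau>" "\<And>j. g j \<in> carrier G" "\<And>j. h j \<in> carrier G"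
    using assms unfolding xy sd_elt_def by auto
  then show ?thesis
    unfolding xy sd_mult_def sd_refl_def
    by (simp add: inv_into_conj_rev_pos o_inv_distrib bij_imp_bij_inv o_assoc fun_eq_iff
        inv_mult_group bij_is_inj)
qed

lemma sd_refl_sd_refl:
  assumes "sd_elt G x"
  shows "sd_refl G n (sd_refl G n x) = x"
proof -
  obtain g \<sigma> where x: "x = (g, \<sigma>)"
    by (metis prod.exhaust)
  have "bij \<sigma>" "\<And>j. g j \<in> carrier G"
    using assms unfolding x sd_elt_def by auto
  then show ?thesis
    unfolding x sd_refl_def
    by (simp add: inv_into_conj_rev_pos fun_eq_iff bij_is_surj surj_f_inv_f)
qed

lemma sd_refl_sd_inv:
  assumes "sd_elt G x"
  shows "sd_refl G n (sd_inv G x) = sd_inv G (sd_refl G n x)"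
proof -
  obtain g \<sigma> where x: "x = (g, \<sigma>)"
    by (metis prod.exhaust)
  have "bij \<sigma>" "\<And>j. g j \<in> carrier G"
    using assms unfolding x sd_elt_def by auto
  then show ?thesis
    unfolding x sd_refl_def sd_inv_def
    by (simp add: inv_into_conj_rev_pos inv_inv_eq bij_is_surj surj_f_inv_f)
qed

lemma sd_refl_one: "sd_refl G n ((\<lambda>k. \<one>), id) = ((\<lambda>k. \<one>), id)"
  unfolding sd_refl_def by (simp add: fun_eq_iff)

lemma sd_refl_gen_pos_elt:
  assumes "1 \<le> i" "i < n"
  shows "sd_refl G n (gen_pos_elt G i \<beta>) = ((\<lambda>k. \<one>)(n - i := inv (\<beta> i)), transp_adj (n - i))"
proof -
  have "rev_pos n k = i \<longleftrightarrow> k = n + 1 - i" "transp_adj i j = i \<longleftrightarrow> j = i + 1" for j k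
    using assms by (auto simp: rev_pos_def transp_adj_def)
  moreover have "rev_pos n k = i + 1 \<longleftrightarrow> k = n - i" for k
    using assms by (auto simp: rev_pos_def)
  ultimately have "(\<lambda>k. inv (((\<lambda>k. \<one>)(i := \<beta> i)) (transp_adj i (rev_pos n k)))) =
      (\<lambda>k. \<one>)(n - i := inv (\<beta> i))"
    by (auto simp: fun_eq_iff)
  then show ?thesis
    unfolding gen_pos_elt_eq sd_refl_def prod.case inv_transp_adj rev_pos_conj_transp_adj[OF assms]
    by (rule arg_cong[where f = "\<lambda>g. (g, _)"])
qed

lemma gen_elt_refl_obj_pos:
  assumes "1 \<le> i" "i < n"
  shows "gen_elt G (n - i, True) (refl_obj G n (gen_act G (i, True) \<beta>)) =
    sd_refl G n (gen_elt G (i, True) \<beta>)"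
proof -
  have "refl_obj G n (gen_act G (i, True) \<beta>) (n - i) = inv (\<beta> i)"
    unfolding refl_obj_at[OF assms] by (simp add: gen_act_def)
  then show ?thesis
    unfolding gen_elt_def by (simp add: sd_refl_gen_pos_elt[OF assms]) (simp add: gen_pos_elt_eq)
qed

(* The case of b_i^-1 reduces to that of b_i, whose inverse defines its element. *)
lemma gen_elt_refl_obj:
  assumes "1 \<le> i" "i < n" "carrier_valued G \<beta>"
  shows "gen_elt G (n - i, s) (refl_obj G n (gen_act G (i, s) \<beta>)) =
    sd_refl G n (gen_elt G (i, s) \<beta>)"
proof (cases s)
  case True
  then show ?thesis using gen_elt_refl_obj_pos[OF assms(1,2)] by simp
next
  case False
  define \<beta>' where "\<beta>' = gen_act G (i, False) \<beta>"
  have "carrier_valued G \<beta>'"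
    unfolding \<beta>'_def by (rule carrier_valued_gen_act[OF assms(3)])
  have \<beta>: "gen_act G (i, True) \<beta>' = \<beta>"
    unfolding \<beta>'_def by (rule gen_act_pos_neg[OF assms(3)])
  have "sd_refl G n (gen_elt G (i, False) \<beta>) = sd_inv G (sd_refl G n (gen_pos_elt G i \<beta>'))"
    unfolding gen_elt_def \<beta>'_def
    by (simp add: sd_refl_sd_inv sd_elt_gen_pos_elt carrier_valued_gen_act assms(3))
  also have "sd_refl G n (gen_pos_elt G i \<beta>') = gen_elt G (n - i, True) (refl_obj G n \<beta>)"
    using gen_elt_refl_obj_pos[OF assms(1,2), of \<beta>'] unfolding \<beta> gen_elt_def by simp
  also have "\<dots> = gen_pos_elt G (n - i) (gen_act G (n - i, False) (refl_obj G n \<beta>'))"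
    using gen_act_refl_obj[OF assms, of False] unfolding gen_elt_def \<beta>'_def by simp
  finally show ?thesis
    using False unfolding gen_elt_def \<beta>'_def by simp
qed

lemma braid_elt_append:
  "carrier_valued G \<gamma> \<Longrightarrow>
    braid_elt G (u @ v) \<gamma> = sd_mult G (braid_elt G u (braid_act G v \<gamma>)) (braid_elt G v \<gamma>)"
proof (induction u)
  case Nil
  then show ?case by (simp add: sd_mult_one_left sd_elt_braid_elt)
next
  case (Cons x u)
  then show ?case
    by (simp add: braid_act_append sd_mult_assoc sd_elt_gen_elt sd_elt_braid_elt
        carrier_valued_braid_act)
qed

lemma braid_act_refl_word:
  "set w \<subseteq> gens n \<Longrightarrow> carrier_valued G \<gamma> \<Longrightarrow>
    braid_act G (refl_word n w) (refl_obj G n (braid_act G w \<gamma>)) = refl_obj G n \<gamma>"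
proof (induction w)
  case Nil
  then show ?case by (simp add: refl_word_def)
next
  case (Cons x w)
  obtain i s where x: "x = (i, s)" and i: "1 \<le> i" "i < n"
    using Cons.prems(1) unfolding gens_def by (cases x) auto
  have "gen_act G (n - i, s) (refl_obj G n (gen_act G (i, s) (braid_act G w \<gamma>))) =
      refl_obj G n (braid_act G w \<gamma>)"
    by (rule gen_act_refl_obj[OF i carrier_valued_braid_act[OF Cons.prems(2)]])
  with Cons show ?case
    unfolding x refl_word_Cons braid_act_append by simp
qed

lemma braid_elt_refl_word:
  "set w \<subseteq> gens n \<Longrightarrow> carrier_valued G \<gamma> \<Longrightarrow>
    braid_elt G (refl_word n w) (refl_obj G n (braid_act G w \<gamma>)) = sd_refl G n (braid_elt G w \<gamma>)"
proof (induction w)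
  case Nil
  then show ?case by (simp add: refl_word_def sd_refl_one)
next
  case (Cons x w)
  obtain i s where x: "x = (i, s)" and i: "1 \<le> i" "i < n"
    using Cons.prems(1) unfolding gens_def by (cases x) auto
  define \<beta> where "\<beta> = braid_act G w \<gamma>"
  have \<beta>: "carrier_valued G \<beta>"
    unfolding \<beta>_def by (rule carrier_valued_braid_act[OF Cons.prems(2)])
  define \<delta> where "\<delta> = refl_obj G n (gen_act G (i, s) \<beta>)"
  have \<delta>: "carrier_valued G \<delta>"
    unfolding \<delta>_def by (intro carrier_valued_refl_obj carrier_valued_gen_act \<beta>)
  have "braid_elt G (refl_word n (x # w)) (refl_obj G n (braid_act G (x # w) \<gamma>))
      = sd_mult G (braid_elt G (refl_word n w) (gen_act G (n - i, s) \<delta>)) (gen_elt G (n - i, s) \<delta>)"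
    using braid_elt_append[OF \<delta>, of "refl_word n w" "[(n - i, s)]"]
    unfolding x refl_word_Cons \<delta>_def \<beta>_def
    by (simp add: sd_mult_one_right sd_elt_gen_elt \<delta>[unfolded \<delta>_def \<beta>_def])
  also have "\<dots> = sd_mult G (sd_refl G n (braid_elt G w \<gamma>)) (sd_refl G n (gen_elt G (i, s) \<beta>))"
    unfolding \<delta>_def gen_act_refl_obj[OF i \<beta>] gen_elt_refl_obj[OF i \<beta>]
    using Cons by (simp add: \<beta>_def)
  also have "\<dots> = sd_refl G n (braid_elt G (x # w) \<gamma>)"
    unfolding x \<beta>_def
    by (simp add: sd_refl_sd_mult sd_elt_gen_elt sd_elt_braid_elt Cons.prems(2)
        carrier_valued_braid_act)
  finally show ?case .
qed

lemma refl_mor_eq_sd_refl: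
  assumes "f \<in> hom G n \<gamma>1 \<gamma>2" "carrier_valued G \<gamma>1"
  shows "refl_mor G n \<gamma>1 f = sd_refl G n f"
proof -
  let ?P = "\<lambda>w. set w \<subseteq> gens n \<and> braid_elt G w \<gamma>1 = f"
  have "\<exists>w. ?P w"
    using assms(1) unfolding hom_def by auto
  then have w: "?P (SOME w. ?P w)"
    by (rule someI_ex)
  show ?thesis
    unfolding refl_mor_def Let_def braid_elt_refl_word[OF conjunct1[OF w] assms(2)]
    using conjunct2[OF w] by simp
qed

lemma sd_refl_hom:
  assumes "f \<in> hom G n \<gamma>1 \<gamma>2" "carrier_valued G \<gamma>1"
  shows "sd_refl G n f \<in> hom G n (refl_obj G n \<gamma>2) (refl_obj G n \<gamma>1)"
proof -
  obtain w where w: "set w \<subseteq> gens n" "braid_elt G w \<gamma>1 = f" "braid_act G w \<gamma>1 = \<gamma>2"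
    using assms(1) unfolding hom_def by auto
  show ?thesis
    unfolding hom_def mem_Collect_eq
    using w refl_word_gens[OF w(1)] braid_act_refl_word[OF w(1) assms(2)]
      braid_elt_refl_word[OF w(1) assms(2)]
    by (intro exI[of _ "refl_word n w"]) simp
qed

lemma sd_refl_hom_back:
  assumes "h \<in> hom G n (refl_obj G n \<gamma>2) (refl_obj G n \<gamma>1)" "\<gamma>1 \<in> objs G n" "\<gamma>2 \<in> objs G n"
  shows "sd_refl G n h \<in> hom G n \<gamma>1 \<gamma>2"
  using sd_refl_hom[OF assms(1) carrier_valued_refl_obj[OF carrier_valued_objs[OF assms(3)]]]
  by (simp add: refl_obj_refl_obj assms(2,3))

lemma bij_betw_refl_mor:
  assumes \<gamma>: "\<gamma>1 \<in> objs G n" "\<gamma>2 \<in> objs G n"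
  shows "bij_betw (refl_mor G n \<gamma>1) (hom G n \<gamma>1 \<gamma>2) (hom G n (refl_obj G n \<gamma>2) (refl_obj G n \<gamma>1))"
proof (rule bij_betw_byWitness[where f' = "sd_refl G n"])
  have cv: "carrier_valued G \<gamma>1" "carrier_valued G (refl_obj G n \<gamma>2)"
    using \<gamma> by (simp_all add: carrier_valued_objs carrier_valued_refl_obj)
  show "\<forall>f\<in>hom G n \<gamma>1 \<gamma>2. sd_refl G n (refl_mor G n \<gamma>1 f) = f"
  proof
    fix f
    assume f: "f \<in> hom G n \<gamma>1 \<gamma>2"
    show "sd_refl G n (refl_mor G n \<gamma>1 f) = f"
      unfolding refl_mor_eq_sd_refl[OF f cv(1)] by (rule sd_refl_sd_refl[OF sd_elt_hom[OF f cv(1)]])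
  qed
  show "\<forall>h\<in>hom G n (refl_obj G n \<gamma>2) (refl_obj G n \<gamma>1). refl_mor G n \<gamma>1 (sd_refl G n h) = h"
  proof
    fix h
    assume h: "h \<in> hom G n (refl_obj G n \<gamma>2) (refl_obj G n \<gamma>1)"
    have h': "sd_refl G n h \<in> hom G n \<gamma>1 \<gamma>2"
      by (rule sd_refl_hom_back[OF h \<gamma>])
    show "refl_mor G n \<gamma>1 (sd_refl G n h) = h"
      unfolding refl_mor_eq_sd_refl[OF h' cv(1)] by (rule sd_refl_sd_refl[OF sd_elt_hom[OF h cv(2)]])
  qed
  show "refl_mor G n \<gamma>1 ` hom G n \<gamma>1 \<gamma>2 \<subseteq> hom G n (refl_obj G n \<gamma>2) (refl_obj G n \<gamma>1)"
  proof (rule image_subsetI)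
    fix f
    assume f: "f \<in> hom G n \<gamma>1 \<gamma>2"
    show "refl_mor G n \<gamma>1 f \<in> hom G n (refl_obj G n \<gamma>2) (refl_obj G n \<gamma>1)"
      unfolding refl_mor_eq_sd_refl[OF f cv(1)] by (rule sd_refl_hom[OF f cv(1)])
  qed
  show "sd_refl G n ` hom G n (refl_obj G n \<gamma>2) (refl_obj G n \<gamma>1) \<subseteq> hom G n \<gamma>1 \<gamma>2"
    by (rule image_subsetI) (rule sd_refl_hom_back[OF _ \<gamma>])
qed

end

theorem proposition2p21:
  fixes G (structure) and n :: nat
  assumes "group G" and "finite (carrier G)"
  shows "(\<forall>\<gamma>\<in>objs G n. \<forall>w w'. set w \<subseteq> gens n \<longrightarrow> set w' \<subseteq> gens n \<longrightarrow>
            braid_elt G w \<gamma> = braid_elt G w' \<gamma> \<longrightarrow>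
            braid_elt G (refl_word n w) (refl_obj G n (braid_act G w \<gamma>)) =
            braid_elt G (refl_word n w') (refl_obj G n (braid_act G w' \<gamma>)))
       \<and> (\<forall>\<gamma>1\<in>objs G n. \<forall>\<gamma>2\<in>objs G n.
            bij_betw (refl_mor G n \<gamma>1) (hom G n \<gamma>1 \<gamma>2) (hom G n (refl_obj G n \<gamma>2) (refl_obj G n \<gamma>1)))"
proof -
  interpret group G by (rule assms(1))
  have well_defined: "braid_elt G (refl_word n w) (refl_obj G n (braid_act G w \<gamma>)) =
      braid_elt G (refl_word n w') (refl_obj G n (braid_act G w' \<gamma>))"
    if "\<gamma> \<in> objs G n" "set w \<subseteq> gens n" "set w' \<subseteq> gens n" "braid_elt G w \<gamma> = braid_elt G w' \<gamma>"
    for \<gamma> w w'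
    using that(4) braid_elt_refl_word[OF that(2) carrier_valued_objs[OF that(1)]]
      braid_elt_refl_word[OF that(3) carrier_valued_objs[OF that(1)]]
    by simp
  show ?thesis
    using well_defined bij_betw_refl_mor by blast
qed

end
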